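(* Let $\mathbf{G}$ be a labeled multilayer directed network on $\mathcal{V}=\{v_1,\dots,v_n\}$ with labels $\{C_1,\dots,C_h\}$ and attractiveness values $A_{i,l}$ such that for each $l$ the values $A_{1,l},\dots,A_{n,l}$ are pairwise distinct, and suppose $\mathbf{G}$ is extremal, i.e. $P(\mathbf{G})=\min_{\mathbf{H}\in\mathcal{R}(\mathbf{G})}P(\mathbf{H})$ or $P(\mathbf{G})=\max_{\mathbf{H}\in\mathcal{R}(\mathbf{G})}P(\mathbf{H})$. Let $E\subseteq\mathcal{E}$ be a nonempty edge set with $\Delta(E)=0$. Then there is no label $C_l$ with $C_l\in\mathcal{C}(e)$ for all $e\in E$ (i.e. the edges of $E$ do not share a common label). Equivalently, if all edges of $E$ share a common label, then $\Delta(E)=1$.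
   Context: A labeled multilayer directed network $\mathbf{G}=(\mathcal{V},\mathcal{E})$ is a finite simple directed graph (no self-loops, no multiple edges) on nodes $\mathcal{V}=\{v_1,\dots,v_n\}$ in which each edge $v_i\to v_j\in\mathcal{E}$ carries a nonempty label set $\mathcal{C}(i,j)\subseteq\{C_1,\dots,C_h\}$; an ordered pair $(v_i,v_j)$ is an edge iff $\mathcal{C}(i,j)\neq\emptyset$. The $l$-th layer $\mathbf{G}_l=(\mathcal{V}_l,\mathcal{E}_l)$ consists of all edges with $C_l\in\mathcal{C}(i,j)$ and their endpoints. Each node $v_i$ has, for each $l$, an attractiveness $A_{i,l}\ge 0$; let $A_{\max,l}=\max_i A_{i,l}$. The potential energy of $v_i$ in layer $l$ is $P_l(i)=\sum_{j=1}^n (A_{\max,l}-A_{j,l})\,\chi(v_i\to v_j\in\mathcal{E}_l)$, and $P(\mathbf{G})=\sum_{i=1}^n\sum_{l=1}^h P_l(i)$. A rewiring move replaces, for some layer $l$ and some edge $v_j\to v_k\in\mathcal{E}_l$, the layer-$l$ edge $v_j\to v_k$ by a layer-$l$ edge $v_j\to v_w$ with $w\neq j$ and $v_j\to v_w\notin\mathcal{E}_l$ (i.e. $C_l$ is removed from $\mathcal{C}(j,k)$ and added to $\mathcal{C}(j,w)$; the edge $v_j\to v_k$ disappears if its label set becomes empty, and $v_j\to v_w$ is created if it did not exist). $\mathcal{R}(\mathbf{G})$ is the set of all labeled multilayer networks (same nodes, same attractiveness values) obtainable from $\mathbf{G}$ by finite sequences of rewiring moves (including $\mathbf{G}$). For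 an edge set $F$, $\lceil F\rceil_{src}$ (resp. $\lceil F\rceil_{tar}$) is the set of source (resp. target) nodes of edges of $F$. A node $u$ is a $(2,\mathbf{G})$-follower of $v$ if the directed shortest-path distance from $u$ to $v$ in $\mathbf{G}$ (ignoring labels) equals exactly $2$. The removal procedure on $E$: set $F:=E$; while there exists a node $v\in\lceil F\rceil_{tar}$ having no $(2,\mathbf{G})$-follower in $\lceil F\rceil_{src}$, choose one such $v$ and remove from $F$ all edges of $F$ whose target is $v$; when no such node exists (or $F=\emptyset$), stop and set $\delta(E):=F$ (this is independent of the choices made). $\Delta(E)=1$ if $\delta(E)=\emptyset$, and $\Delta(E)=0$ otherwise. *)

theory Defs
  imports Complex_Main
begin

text \<open>A labeled multilayer directed network on nodes 0..<n with labels 0..<h is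
  represented by its label-set function C :: nat \<Rightarrow> nat \<Rightarrow> nat set, where C i j is the
  label set of the ordered pair (i,j); (i,j) is an edge iff C i j \<noteq> {}.\<close>

definition wf_net :: "nat \<Rightarrow> nat \<Rightarrow> (nat \<Rightarrow> nat \<Rightarrow> nat set) \<Rightarrow> bool" where
  "wf_net n h C \<longleftrightarrow>
     (\<forall>i j. C i j \<subseteq> {0..<h}) \<and> (\<forall>i. C i i = {}) \<and>
     (\<forall>i j. C i j \<noteq> {} \<longrightarrow> i < n \<and> j < n)"

definition is_edge :: "(nat \<Rightarrow> nat \<Rightarrow> nat set) \<Rightarrow> nat \<Rightarrow> nat \<Rightarrow> bool" where
  "is_edge C i j \<longleftrightarrow> C i j \<noteq> {}"

definition Amax :: "nat \<Rightarrow> (nat \<Rightarrow> nat \<Rightarrow> real) \<Rightarrow> nat \<Rightarrow> real" where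
  "Amax n A l = Max {A j l | j. j < n}"

definition potential_layer :: "nat \<Rightarrow> (nat \<Rightarrow> nat \<Rightarrow> real) \<Rightarrow> (nat \<Rightarrow> nat \<Rightarrow> nat set) \<Rightarrow> nat \<Rightarrow> nat \<Rightarrow> real" where
  "potential_layer n A C l i = (\<Sum>j<n. (Amax n A l - A j l) * (if l \<in> C i j then 1 else 0))"

definition potential :: "nat \<Rightarrow> nat \<Rightarrow> (nat \<Rightarrow> nat \<Rightarrow> real) \<Rightarrow> (nat \<Rightarrow> nat \<Rightarrow> nat set) \<Rightarrow> real" where
  "potential n h A C = (\<Sum>i<n. \<Sum>l<h. potential_layer n A C l i)"

definition rewire :: "nat \<Rightarrow> (nat \<Rightarrow> nat \<Rightarrow> nat set) \<Rightarrow> (nat \<Rightarrow> nat \<Rightarrow> nat set) \<Rightarrow> bool" where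
  "rewire n C C' \<longleftrightarrow> (\<exists>l j k w. l \<in> C j k \<and> w < n \<and> w \<noteq> j \<and> l \<notin> C j w \<and>
      C' = C(j := (C j)(k := C j k - {l}, w := C j w \<union> {l})))"

definition rewirings :: "nat \<Rightarrow> (nat \<Rightarrow> nat \<Rightarrow> nat set) \<Rightarrow> (nat \<Rightarrow> nat \<Rightarrow> nat set) set" where
  "rewirings n C = {C'. (rewire n)\<^sup>*\<^sup>* C C'}"

definition extremal :: "nat \<Rightarrow> nat \<Rightarrow> (nat \<Rightarrow> nat \<Rightarrow> real) \<Rightarrow> (nat \<Rightarrow> nat \<Rightarrow> nat set) \<Rightarrow> bool" where
  "extremal n h A C \<longleftrightarrow>
     (\<forall>H \<in> rewirings n C. potential n h A C \<le> potential n h A H) \<or>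
     (\<forall>H \<in> rewirings n C. potential n h A H \<le> potential n h A C)"

definition dist_eq :: "(nat \<Rightarrow> nat \<Rightarrow> nat set) \<Rightarrow> nat \<Rightarrow> nat \<Rightarrow> nat \<Rightarrow> bool" where
  "dist_eq C u v d \<longleftrightarrow> ((is_edge C) ^^ d) u v \<and> (\<forall>m<d. \<not> ((is_edge C) ^^ m) u v)"

definition follower2 :: "(nat \<Rightarrow> nat \<Rightarrow> nat set) \<Rightarrow> nat \<Rightarrow> nat \<Rightarrow> bool" where
  "follower2 C u v \<longleftrightarrow> dist_eq C u v 2"

definition src :: "(nat \<times> nat) set \<Rightarrow> nat set" where
  "src F = fst ` F"

definition tar :: "(nat \<times> nat) set \<Rightarrow> nat set" where
  "tar F = snd ` F"

definition removable :: "(nat \<Rightarrow> nat \<Rightarrow> nat set) \<Rightarrow> (nat \<times> nat) set \<Rightarrow> nat \<Rightarrow> bool" where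
  "removable C F v \<longleftrightarrow> v \<in> tar F \<and> \<not> (\<exists>u \<in> src F. follower2 C u v)"

definition removal_step :: "(nat \<Rightarrow> nat \<Rightarrow> nat set) \<Rightarrow> (nat \<times> nat) set \<Rightarrow> (nat \<times> nat) set \<Rightarrow> bool" where
  "removal_step C F F' \<longleftrightarrow> (\<exists>v. removable C F v \<and> F' = {e \<in> F. snd e \<noteq> v})"

definition removal_result :: "(nat \<Rightarrow> nat \<Rightarrow> nat set) \<Rightarrow> (nat \<times> nat) set \<Rightarrow> (nat \<times> nat) set \<Rightarrow> bool" where
  "removal_result C E F \<longleftrightarrow> (removal_step C)\<^sup>*\<^sup>* E F \<and> \<not> (\<exists>v. removable C F v)"

text \<open>The outcome of the removal procedure (independent of choices, as stated in the paper).\<close>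
definition delta :: "(nat \<Rightarrow> nat \<Rightarrow> nat set) \<Rightarrow> (nat \<times> nat) set \<Rightarrow> (nat \<times> nat) set" where
  "delta C E = (THE F. removal_result C E F)"

definition Delta :: "(nat \<Rightarrow> nat \<Rightarrow> nat set) \<Rightarrow> (nat \<times> nat) set \<Rightarrow> nat" where
  "Delta C E = (if delta C E = {} then 1 else 0)"

end

theory Submission
  imports Defs
begin

text \<open>Moving a layer-\<open>l\<close> edge \<open>u \<rightarrow> t\<close> to \<open>u \<rightarrow> v\<close> changes the potential by
  \<open>A t l - A v l\<close>. So in an extremal network, after possibly replacing \<open>A\<close> by \<open>-A\<close>, every
  layer-\<open>l\<close> edge \<open>u \<rightarrow> t\<close> satisfies \<open>A v l \<le> A t l\<close> for each \<open>v \<noteq> u\<close> without a layer-\<open>l\<close>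
  edge \<open>u \<rightarrow> v\<close>. Let \<open>F\<close> be a nonempty set of edges sharing the label \<open>l\<close> and \<open>v\<close> its target
  of largest \<open>A v l\<close>. A source \<open>u\<close> of \<open>F\<close> at distance 2 from \<open>v\<close> has an edge \<open>u \<rightarrow> t\<close> in \<open>F\<close>
  but no edge to \<open>v\<close>, so \<open>A v l \<le> A t l \<le> A v l\<close> and \<open>t = v\<close> by distinctness, which is absurd.
  Hence the removal procedure always finds a removable target and empties \<open>E\<close>.\<close>

definition rewired :: "(nat \<Rightarrow> nat \<Rightarrow> nat set) \<Rightarrow> nat \<Rightarrow> nat \<Rightarrow> nat \<Rightarrow> nat \<Rightarrow> nat \<Rightarrow> nat \<Rightarrow> nat set" where
  "rewired C l u t v = C(u := (C u)(t := C u t - {l}, v := C u v \<union> {l}))"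

lemma sum_eq_sum_plus_diff_on:
  fixes f g :: "'a \<Rightarrow> 'b::ab_group_add"
  assumes "finite S" "D \<subseteq> S" "\<forall>x\<in>S - D. f x = g x"
  shows "sum f S = sum g S + (\<Sum>x\<in>D. f x - g x)"
proof -
  have "sum f S - sum g S = (\<Sum>x\<in>S. f x - g x)"
    by (simp add: sum_subtractf)
  also have "\<dots> = (\<Sum>x\<in>D. f x - g x)"
    using assms by (intro sum.mono_neutral_right) auto
  finally show ?thesis by (simp add: algebra_simps)
qed

lemma potential_rewired:
  assumes wf: "wf_net n h C" and lt: "l \<in> C u t" and "v < n" "v \<noteq> u" and lv: "l \<notin> C u v"
  shows "potential n h A (rewired C l u t v) = potential n h A C + (A t l - A v l)"
proof -
  define C' where "C' = rewired C l u t v"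
  have "u < n" "t < n" "l < h"
    using wf lt unfolding wf_net_def by (blast, blast, force)
  have "t \<noteq> v" using lt lv by auto
  have "l' \<in> C' i j \<longleftrightarrow> l' \<in> C i j" if "l' \<noteq> l \<or> i \<noteq> u" for l' i j
    using that unfolding C'_def rewired_def by auto
  then have unchanged: "potential_layer n A C' l' i = potential_layer n A C l' i"
    if "l' \<noteq> l \<or> i \<noteq> u" for l' i
    using that unfolding potential_layer_def by simp
  let ?w = "\<lambda>j. Amax n A l - A j l"
  have "potential_layer n A C' l u = potential_layer n A C l u
      + (\<Sum>j\<in>{t, v}. ?w j * (if l \<in> C' u j then 1 else 0) - ?w j * (if l \<in> C u j then 1 else 0))"
    unfolding potential_layer_def
    by (rule sum_eq_sum_plus_diff_on) (use \<open>t < n\<close> \<open>v < n\<close> in \<open>auto simp: C'_def rewired_def\<close>)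
  also have "\<dots> = potential_layer n A C l u + (A t l - A v l)"
    using \<open>t \<noteq> v\<close> lt lv by (simp add: C'_def rewired_def)
  finally have layer_u: "potential_layer n A C' l u = potential_layer n A C l u + (A t l - A v l)" .
  have "(\<Sum>l'<h. potential_layer n A C' l' u)
      = (\<Sum>l'<h. potential_layer n A C l' u) + (\<Sum>l'\<in>{l}. potential_layer n A C' l' u - potential_layer n A C l' u)"
    by (rule sum_eq_sum_plus_diff_on) (use \<open>l < h\<close> unchanged in auto)
  then have "(\<Sum>l'<h. potential_layer n A C' l' u) = (\<Sum>l'<h. potential_layer n A C l' u) + (A t l - A v l)"
    using layer_u by simp
  moreover have "potential n h A C'
      = potential n h A C + (\<Sum>i\<in>{u}. (\<Sum>l'<h. potential_layer n A C' l' i) - (\<Sum>l'<h. potential_layer n A C l' i))"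
    unfolding potential_def by (rule sum_eq_sum_plus_diff_on) (use \<open>u < n\<close> unchanged in auto)
  ultimately show ?thesis unfolding C'_def by simp
qed

lemma rewired_in_rewirings:
  assumes "l \<in> C u t" "v < n" "v \<noteq> u" "l \<notin> C u v"
  shows "rewired C l u t v \<in> rewirings n C"
  using assms unfolding rewirings_def rewire_def rewired_def by blast

lemma extremal_imp_moves_monotone:
  assumes wf: "wf_net n h C" and "extremal n h A C"
  obtains B where "B = A \<or> B = (\<lambda>i l. - A i l)"
    and "\<And>l u t v. l \<in> C u t \<Longrightarrow> v < n \<Longrightarrow> v \<noteq> u \<Longrightarrow> l \<notin> C u v \<Longrightarrow> B v l \<le> B t l"
  using \<open>extremal n h A C\<close> unfolding extremal_def
proof
  assume min: "\<forall>H\<in>rewirings n C. potential n h A C \<le> potential n h A H"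
  show thesis
  proof (rule that[of A])
    fix l u t v assume move: "l \<in> C u t" "v < n" "v \<noteq> u" "l \<notin> C u v"
    with min rewired_in_rewirings have "potential n h A C \<le> potential n h A (rewired C l u t v)"
      by blast
    then show "A v l \<le> A t l" using potential_rewired[OF wf move] by simp
  qed simp
next
  assume max: "\<forall>H\<in>rewirings n C. potential n h A H \<le> potential n h A C"
  show thesis
  proof (rule that[of "\<lambda>i l. - A i l"])
    fix l u t v assume move: "l \<in> C u t" "v < n" "v \<noteq> u" "l \<notin> C u v"
    with max rewired_in_rewirings have "potential n h A (rewired C l u t v) \<le> potential n h A C"
      by blast
    then show "- A v l \<le> - A t l" using potential_rewired[OF wf move] by simp
  qed simp
qed

lemma follower2_imp_no_edge:
  assumes "follower2 C u v"
  shows "u \<noteq> v" "C u v = {}"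
proof -
  have no_path: "\<not> (is_edge C ^^ m) u v" if "m < 2" for m
    using assms that unfolding follower2_def dist_eq_def by blast
  from no_path[of 0] show "u \<noteq> v" by auto
  from no_path[of 1] show "C u v = {}" unfolding relpowp_1 is_edge_def by simp
qed

lemma ex_removable_common_label:
  fixes B :: "nat \<Rightarrow> 'a::linorder"
  assumes wf: "wf_net n h C"
    and monotone: "\<And>u t v. l \<in> C u t \<Longrightarrow> v < n \<Longrightarrow> v \<noteq> u \<Longrightarrow> l \<notin> C u v \<Longrightarrow> B v \<le> B t"
    and inj: "inj_on B {0..<n}"
    and F_label: "\<forall>(u, t) \<in> F. l \<in> C u t" and "F \<noteq> {}"
  shows "\<exists>v. removable C F v"
proof -
  have tar_bound: "x < n" if x: "x \<in> tar F" for x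
  proof -
    obtain u where "(u, x) \<in> F" using x unfolding tar_def by force
    then have "C u x \<noteq> {}" using F_label by auto
    then show ?thesis using wf unfolding wf_net_def by blast
  qed
  then have "finite (B ` tar F)"
    by (meson finite_imageI finite_lessThan finite_subset lessThan_iff subsetI)
  moreover have "B ` tar F \<noteq> {}" using \<open>F \<noteq> {}\<close> unfolding tar_def by simp
  ultimately obtain v where v: "v \<in> tar F" and v_Max: "B v = Max (B ` tar F)"
    using Max_in by (metis imageE)
  have v_max: "B x \<le> B v" if "x \<in> tar F" for x
    unfolding v_Max using \<open>finite (B ` tar F)\<close> that by simp
  have "\<not> follower2 C u v" if "(u, t) \<in> F" for u t
  proof
    assume "follower2 C u v"
    note no_edge = follower2_imp_no_edge[OF this]
    have "l \<in> C u t" using F_label that by auto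
    have "t \<in> tar F" using that unfolding tar_def by force
    have "B v \<le> B t"
      using monotone[OF \<open>l \<in> C u t\<close> tar_bound[OF v]] no_edge by simp
    with v_max[OF \<open>t \<in> tar F\<close>] have "B t = B v" by simp
    then have "t = v"
      using inj tar_bound[OF v] tar_bound[OF \<open>t \<in> tar F\<close>] by (simp add: inj_on_eq_iff)
    with \<open>l \<in> C u t\<close> no_edge show False by simp
  qed
  then have "removable C F v"
    using v unfolding removable_def src_def by force
  then show ?thesis ..
qed

lemma removal_steps_subset:
  "(removal_step C)\<^sup>*\<^sup>* E F \<Longrightarrow> F \<subseteq> E"
  by (induction rule: rtranclp_induct) (auto simp: removal_step_def)

lemma removal_steps_to_empty:
  assumes "finite F" and "\<And>F'. F' \<subseteq> F \<Longrightarrow> F' \<noteq> {} \<Longrightarrow> \<exists>v. removable C F' v"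
  shows "(removal_step C)\<^sup>*\<^sup>* F {}"
  using assms
proof (induction F rule: finite_psubset_induct)
  case (psubset F)
  show ?case
  proof (cases "F = {}")
    case False
    then obtain v where v: "removable C F v" using psubset.prems by blast
    define F' where "F' = {e \<in> F. snd e \<noteq> v}"
    have "removal_step C F F'" unfolding removal_step_def F'_def using v by blast
    moreover have "F' \<subset> F" using v unfolding F'_def removable_def tar_def by auto
    then have "(removal_step C)\<^sup>*\<^sup>* F' {}"
      using psubset.IH psubset.prems by (meson order.trans psubset_imp_subset)
    ultimately show ?thesis by (rule converse_rtranclp_into_rtranclp)
  qed simp
qed

lemma delta_eq_empty:
  assumes "finite E" and removable: "\<And>F. F \<subseteq> E \<Longrightarrow> F \<noteq> {} \<Longrightarrow> \<exists>v. removable C F v"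
  shows "delta C E = {}"
  unfolding delta_def
proof (rule the_equality)
  show "removal_result C E {}"
    using removal_steps_to_empty[OF assms] unfolding removal_result_def removable_def tar_def
    by simp
  show "F = {}" if "removal_result C E F" for F
  proof (rule ccontr)
    assume "F \<noteq> {}"
    moreover have "F \<subseteq> E" using that removal_steps_subset unfolding removal_result_def by blast
    ultimately show False using that removable unfolding removal_result_def by blast
  qed
qed

theorem theorem1:
  fixes n h :: nat and A :: "nat \<Rightarrow> nat \<Rightarrow> real" and C :: "nat \<Rightarrow> nat \<Rightarrow> nat set"
    and E :: "(nat \<times> nat) set"
  assumes net: "wf_net n h C"
    and nonneg: "\<forall>i l. A i l \<ge> 0"
    and distinct: "\<forall>l < h. inj_on (\<lambda>i. A i l) {0..<n}"
    and extr: "extremal n h A C"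
    and E_sub: "\<forall>(i, j) \<in> E. is_edge C i j"
    and E_ne: "E \<noteq> {}"
    and D0: "Delta C E = 0"
  shows "\<not> (\<exists>l. \<forall>(i, j) \<in> E. l \<in> C i j)"
proof
  assume "\<exists>l. \<forall>(i, j) \<in> E. l \<in> C i j"
  then obtain l where E_label: "\<forall>(i, j) \<in> E. l \<in> C i j" by blast
  have "E \<subseteq> {..<n} \<times> {..<n}"
    using E_sub net unfolding is_edge_def wf_net_def by fastforce
  then have "finite E" by (rule finite_subset) simp
  obtain a b where "(a, b) \<in> E" using E_ne by auto
  then have "l < h" using E_label net unfolding wf_net_def by fastforce
  obtain B where B: "B = A \<or> B = (\<lambda>i l. - A i l)"
    and monotone: "\<And>l u t v. l \<in> C u t \<Longrightarrow> v < n \<Longrightarrow> v \<noteq> u \<Longrightarrow> l \<notin> C u v \<Longrightarrow> B v l \<le> B t l"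
    using extremal_imp_moves_monotone[OF net extr] by blast
  have inj: "inj_on (\<lambda>i. B i l) {0..<n}"
    using B distinct \<open>l < h\<close> by (auto simp: inj_on_def)
  have removable: "\<exists>v. removable C F v" if "F \<subseteq> E" "F \<noteq> {}" for F
    by (rule ex_removable_common_label[OF net _ inj]) (use monotone E_label that in auto)
  have "delta C E = {}"
    using \<open>finite E\<close> removable by (rule delta_eq_empty)
  then show False using D0 unfolding Delta_def by simp
qed

end
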